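(* Let $A$ be a reachable $\mathbf{JSL}$-dfa. Then the transition semiring $\mathrm{ts}(A)$, viewed as a $\mathbf{JSL}$-dfa, satisfies $[\mathrm{ts}(A)]^{\mathsf{op}}\cong\mathrm{rqc}(A^{\mathsf{op}})$ as $\mathbf{JSL}$-dfas (equivalently, since both are simple, the states of $[\mathrm{ts}(A)]^{\mathsf{op}}$ accept exactly the languages that are states of $\mathrm{rqc}(A^{\mathsf{op}})$).
   Context: A $\mathbf{JSL}$-dfa $A=(S,\delta,s_0,F)$: finite semilattice $S$, join-preserving $\delta_a\colon S\to S$, initial state $s_0$, final states $F=\{s:s\not\le s_f\}$ for some $s_f$; $\delta_w=\delta_{a_n}\circ\cdots\circ\delta_{a_1}$ for $w=a_1\cdots a_n$; $L(A,s)=\{w:\delta_w(s)\in F\}$. $A$ is reachable if every state is a finite join of states $\delta_w(s_0)$; simple if distinct states accept distinct languages. Morphisms: join-preserving maps preserving transitions, initial state and final states (both ways). The dual $A^{\mathsf{op}}$ has reversed order, transitions $\delta_a^*(s)=$ largest $t$ with $\delta_a(t)\le s$, initial state the largest non-final state, final states $\{s:s_0\not\le s\}$. Transition semiring: $\mathrm{ts}(A)$ is the set of all maps $\bigvee_{i=1}^n\delta_{w_i}\colon S\to S$ ($n\ge0$, $w_i\in\Sigma^*$, join taken pointwise), ordered pointwise, viewed as a $\mathbf{JSL}$-dfa with initial state $\delta_\epsilon=\mathrm{id}_S$, transitions $\bigvee_i\delta_{w_i}\xrightarrow{a}\bigvee_i\delta_{w_ia}$, and final states those $\bigvee_i\delta_{w_i}$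 such that some $w_i$ is accepted by $A$. For a simple $\mathbf{JSL}$-dfa $B$, $\mathrm{rqc}(B)$ (right-derivative closure) is the $\mathbf{JSL}$-dfa whose states are the smallest set of languages containing all $L(B,s)$ and closed under finite unions and right derivatives $K\mapsto Kv^{-1}=\{w:wv\in K\}$, ordered by inclusion, with transitions $K\mapsto a^{-1}K$, initial state the language of $B$, final states those containing $\epsilon$. *)

theory Defs
  imports Main
begin

text \<open>A JSL-dfa is represented concretely by a carrier set of states with an
  explicit partial order; joins are least upper bounds w.r.t. this order.
  The alphabet is the type 'c.\<close>

record ('s, 'c) jdfa =
  St    :: "'s set"
  le    :: "'s \<Rightarrow> 's \<Rightarrow> bool"
  delta :: "'c \<Rightarrow> 's \<Rightarrow> 's"
  init  :: "'s"
  fin   :: "'s set"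

definition is_lub :: "('s, 'c) jdfa \<Rightarrow> 's set \<Rightarrow> 's \<Rightarrow> bool" where
  "is_lub A X x \<longleftrightarrow> x \<in> St A \<and> (\<forall>y\<in>X. le A y x)
     \<and> (\<forall>z\<in>St A. (\<forall>y\<in>X. le A y z) \<longrightarrow> le A x z)"

definition join :: "('s, 'c) jdfa \<Rightarrow> 's set \<Rightarrow> 's" where
  "join A X = (THE x. is_lub A X x)"

definition join_pres :: "('s, 'c) jdfa \<Rightarrow> ('t, 'd) jdfa \<Rightarrow> ('s \<Rightarrow> 't) \<Rightarrow> bool" where
  "join_pres A B f \<longleftrightarrow> f ` St A \<subseteq> St B \<and>
     (\<forall>X. X \<subseteq> St A \<and> finite X \<longrightarrow> f (join A X) = join B (f ` X))"

definition jsl_dfa :: "('s, 'c) jdfa \<Rightarrow> bool" where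
  "jsl_dfa A \<longleftrightarrow>
     finite (St A) \<and>
     (\<forall>x\<in>St A. le A x x) \<and>
     (\<forall>x\<in>St A. \<forall>y\<in>St A. le A x y \<and> le A y x \<longrightarrow> x = y) \<and>
     (\<forall>x\<in>St A. \<forall>y\<in>St A. \<forall>z\<in>St A. le A x y \<and> le A y z \<longrightarrow> le A x z) \<and>
     (\<forall>X. X \<subseteq> St A \<and> finite X \<longrightarrow> (\<exists>x. is_lub A X x)) \<and>
     (\<forall>a. join_pres A A (delta A a)) \<and>
     init A \<in> St A \<and>
     (\<exists>sf\<in>St A. fin A = {s \<in> St A. \<not> le A s sf})"

text \<open>delta_w for w = a1...an is delta_an o ... o delta_a1.\<close>
definition dword :: "('s, 'c) jdfa \<Rightarrow> 'c list \<Rightarrow> 's \<Rightarrow> 's" where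
  "dword A w s = fold (delta A) w s"

definition lang :: "('s, 'c) jdfa \<Rightarrow> 's \<Rightarrow> 'c list set" where
  "lang A s = {w. dword A w s \<in> fin A}"

definition reachable :: "('s, 'c) jdfa \<Rightarrow> bool" where
  "reachable A \<longleftrightarrow> (\<forall>s\<in>St A. \<exists>X. finite X \<and> X \<subseteq> {dword A w (init A) | w. True}
                                    \<and> s = join A X)"

definition simple :: "('s, 'c) jdfa \<Rightarrow> bool" where
  "simple A \<longleftrightarrow> (\<forall>s\<in>St A. \<forall>t\<in>St A. lang A s = lang A t \<longrightarrow> s = t)"

definition morphism :: "('s, 'c) jdfa \<Rightarrow> ('t, 'c) jdfa \<Rightarrow> ('s \<Rightarrow> 't) \<Rightarrow> bool" where
  "morphism A B f \<longleftrightarrow> join_pres A B f \<and>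
     (\<forall>a. \<forall>s\<in>St A. f (delta A a s) = delta B a (f s)) \<and>
     f (init A) = init B \<and>
     (\<forall>s\<in>St A. s \<in> fin A \<longleftrightarrow> f s \<in> fin B)"

definition jdfa_iso :: "('s, 'c) jdfa \<Rightarrow> ('t, 'c) jdfa \<Rightarrow> bool" where
  "jdfa_iso A B \<longleftrightarrow> (\<exists>f g. morphism A B f \<and> morphism B A g \<and>
      (\<forall>s\<in>St A. g (f s) = s) \<and> (\<forall>t\<in>St B. f (g t) = t))"

definition dual :: "('s, 'c) jdfa \<Rightarrow> ('s, 'c) jdfa" where
  "dual A = \<lparr> St = St A,
     le = (\<lambda>x y. le A y x),
     delta = (\<lambda>a s. THE t. t \<in> St A \<and> le A (delta A a t) s \<and>
                     (\<forall>t'\<in>St A. le A (delta A a t') s \<longrightarrow> le A t' t)),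
     init = (THE t. t \<in> St A - fin A \<and> (\<forall>t'\<in>St A - fin A. le A t' t)),
     fin = {s \<in> St A. \<not> le A (init A) s} \<rparr>"

definition tsmap :: "('s, 'c) jdfa \<Rightarrow> 'c list set \<Rightarrow> 's \<Rightarrow> 's" where
  "tsmap A W = (\<lambda>s. if s \<in> St A then join A ((\<lambda>w. dword A w s) ` W) else undefined)"

definition ts :: "('s, 'c) jdfa \<Rightarrow> ('s \<Rightarrow> 's, 'c) jdfa" where
  "ts A = \<lparr> St = {tsmap A W | W. finite W},
     le = (\<lambda>f g. \<forall>s\<in>St A. le A (f s) (g s)),
     delta = (\<lambda>a f. tsmap A ((\<lambda>w. w @ [a]) ` (SOME W. finite W \<and> f = tsmap A W))),
     init = tsmap A {[]},
     fin = {f. \<exists>W. finite W \<and> f = tsmap A W \<and> (\<exists>w\<in>W. w \<in> lang A (init A))} \<rparr>"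

inductive_set rqc_states :: "('s, 'c) jdfa \<Rightarrow> 'c list set set" for B where
  base: "s \<in> St B \<Longrightarrow> lang B s \<in> rqc_states B"
| empty: "{} \<in> rqc_states B"
| union: "K \<in> rqc_states B \<Longrightarrow> K' \<in> rqc_states B \<Longrightarrow> K \<union> K' \<in> rqc_states B"
| rderiv: "K \<in> rqc_states B \<Longrightarrow> {w. w @ v \<in> K} \<in> rqc_states B"

definition rqc :: "('s, 'c) jdfa \<Rightarrow> ('c list set, 'c) jdfa" where
  "rqc B = \<lparr> St = rqc_states B,
     le = (\<subseteq>),
     delta = (\<lambda>a K. {w. a # w \<in> K}),
     init = lang B (init B),
     fin = {K \<in> rqc_states B. [] \<in> K} \<rparr>"

end

theory Submission
  imports Defs "HOL-Library.FuncSet"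
begin

text \<open>
  A state f of ts(A)^op accepts exactly the words w with \<delta>(rev w) \<not>\<le> f, i.e. those w for
  which \<delta>(rev w)(s) \<not>\<le> f(s) for some state s of A. Call a language a constraint language
  if it has the form {w | \<exists>(x, y) \<in> R. \<delta>(rev w)(x) \<not>\<le> y} for a relation R on the states
  of A. Every such language is accepted by a state of ts(A)^op, namely the join of all maps
  \<delta>(u) satisfying the constraints. The constraint languages contain the languages of A^op
  and are closed under unions and right derivatives; conversely, writing each x as a join of
  reachable states \<delta>(u)(s0) shows that every constraint language is a finite union of right
  derivatives of languages of A^op. So the languages of ts(A)^op are exactly the states of
  rqc(A^op). Finally ts(A) is reachable, hence ts(A)^op is simple, and the language map is a
  bijective morphism from ts(A)^op onto rqc(A^op).
\<close>

lemma dword_Nil [simp]: "dword B [] s = s"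
  by (simp add: dword_def)

lemma dword_Cons [simp]: "dword B (a # w) s = dword B w (delta B a s)"
  by (simp add: dword_def)

lemma dword_append [simp]: "dword B (u @ v) s = dword B v (dword B u s)"
  by (simp add: dword_def)

lemma Nil_in_lang_iff: "[] \<in> lang B s \<longleftrightarrow> s \<in> fin B"
  by (simp add: lang_def)

lemma lang_delta: "lang B (delta B a s) = {w. a # w \<in> lang B s}"
  by (simp add: lang_def)

lemma St_dual [simp]: "St (dual B) = St B"
  and le_dual [simp]: "le (dual B) x y = le B y x"
  and fin_dual [simp]: "fin (dual B) = {s \<in> St B. \<not> le B (init B) s}"
  by (simp_all add: dual_def)

subsection \<open>Semilattice automata\<close>

locale jsl =
  fixes B :: "('s, 'c) jdfa"
  assumes jsl_dfa: "jsl_dfa B"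
begin

lemma finite_St: "finite (St B)"
  using jsl_dfa unfolding jsl_dfa_def by (elim conjE) blast

lemma le_refl: "x \<in> St B \<Longrightarrow> le B x x"
  using jsl_dfa unfolding jsl_dfa_def by (elim conjE) blast

lemma le_antisym: "\<lbrakk>x \<in> St B; y \<in> St B; le B x y; le B y x\<rbrakk> \<Longrightarrow> x = y"
  using jsl_dfa unfolding jsl_dfa_def by (elim conjE) blast

lemma le_trans: "\<lbrakk>x \<in> St B; y \<in> St B; z \<in> St B; le B x y; le B y z\<rbrakk> \<Longrightarrow> le B x z"
  using jsl_dfa unfolding jsl_dfa_def by (elim conjE) blast

lemma ex_lub: "\<lbrakk>finite X; X \<subseteq> St B\<rbrakk> \<Longrightarrow> \<exists>x. is_lub B X x"
  using jsl_dfa unfolding jsl_dfa_def by (elim conjE) blast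

lemma join_pres_delta: "join_pres B B (delta B a)"
  using jsl_dfa unfolding jsl_dfa_def by (elim conjE) blast

lemma init_in_St: "init B \<in> St B"
  using jsl_dfa unfolding jsl_dfa_def by (elim conjE) blast

lemma ex_fin_eq: "\<exists>sf\<in>St B. fin B = {s \<in> St B. \<not> le B s sf}"
  using jsl_dfa unfolding jsl_dfa_def by (elim conjE) blast

lemma join_eqI: "is_lub B X x \<Longrightarrow> join B X = x"
  unfolding join_def by (rule the_equality) (auto simp: is_lub_def intro: le_antisym)

lemma is_lub_join: "\<lbrakk>finite X; X \<subseteq> St B\<rbrakk> \<Longrightarrow> is_lub B X (join B X)"
  using ex_lub join_eqI by blast

lemma join_in_St: "\<lbrakk>finite X; X \<subseteq> St B\<rbrakk> \<Longrightarrow> join B X \<in> St B"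
  and le_join: "\<lbrakk>finite X; X \<subseteq> St B; x \<in> X\<rbrakk> \<Longrightarrow> le B x (join B X)"
  using is_lub_join unfolding is_lub_def by blast+

lemma join_le_iff:
  assumes "finite X" "X \<subseteq> St B" "z \<in> St B"
  shows "le B (join B X) z \<longleftrightarrow> (\<forall>x\<in>X. le B x z)"
  using is_lub_join[OF assms(1,2)] assms le_trans[of _ "join B X" z] join_in_St
  unfolding is_lub_def by blast

lemma eq_if_same_upper_bounds:
  assumes "x \<in> St B" "y \<in> St B" "\<And>z. z \<in> St B \<Longrightarrow> le B x z \<longleftrightarrow> le B y z"
  shows "x = y"
  using assms le_refl le_antisym by blast

lemma join_UN:
  assumes "finite I" "\<And>i. i \<in> I \<Longrightarrow> finite (F i) \<and> F i \<subseteq> St B"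
  shows "join B (\<Union>i\<in>I. F i) = join B ((\<lambda>i. join B (F i)) ` I)"
proof (rule eq_if_same_upper_bounds)
  have UN: "finite (\<Union>i\<in>I. F i)" "(\<Union>i\<in>I. F i) \<subseteq> St B"
    using assms by auto
  have joins: "finite ((\<lambda>i. join B (F i)) ` I)" "(\<lambda>i. join B (F i)) ` I \<subseteq> St B"
    using assms join_in_St by auto
  show "join B (\<Union>i\<in>I. F i) \<in> St B" "join B ((\<lambda>i. join B (F i)) ` I) \<in> St B"
    using join_in_St UN joins by blast+
  show "le B (join B (\<Union>i\<in>I. F i)) z \<longleftrightarrow> le B (join B ((\<lambda>i. join B (F i)) ` I)) z"
    if "z \<in> St B" for z
    using join_le_iff[OF UN that] join_le_iff[OF joins that] join_le_iff[OF _ _ that] assms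
    by auto
qed

lemma join_singleton [simp]: "x \<in> St B \<Longrightarrow> join B {x} = x"
  by (rule join_eqI) (auto simp: is_lub_def le_refl)

lemma delta_in_St: "s \<in> St B \<Longrightarrow> delta B a s \<in> St B"
  and delta_join: "\<lbrakk>finite X; X \<subseteq> St B\<rbrakk> \<Longrightarrow> delta B a (join B X) = join B (delta B a ` X)"
  using join_pres_delta unfolding join_pres_def by blast+

lemma delta_mono:
  assumes "x \<in> St B" "y \<in> St B" "le B x y"
  shows "le B (delta B a x) (delta B a y)"
proof -
  have "join B {x, y} = y"
    by (rule join_eqI) (use assms in \<open>auto simp: is_lub_def le_refl\<close>)
  then have "delta B a y = join B (delta B a ` {x, y})"
    using delta_join[of "{x, y}" a] assms by simp
  then show ?thesis
    using le_join[of "delta B a ` {x, y}" "delta B a x"] assms delta_in_St by simp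
qed

lemma dword_in_St: "s \<in> St B \<Longrightarrow> dword B w s \<in> St B"
  by (induction w arbitrary: s) (auto simp: delta_in_St)

lemma dword_join: "\<lbrakk>finite X; X \<subseteq> St B\<rbrakk> \<Longrightarrow> dword B w (join B X) = join B (dword B w ` X)"
proof (induction w arbitrary: X)
  case (Cons a w)
  have "finite (delta B a ` X)" "delta B a ` X \<subseteq> St B"
    using Cons.prems delta_in_St by auto
  then show ?case
    using Cons delta_join by (simp add: image_image)
qed simp

subsection \<open>The dual automaton\<close>

lemma init_dual_in_St: "init (dual B) \<in> St B"
  and fin_eq: "fin B = {s \<in> St B. \<not> le B s (init (dual B))}"
proof -
  obtain sf where sf: "sf \<in> St B" "fin B = {s \<in> St B. \<not> le B s sf}"
    using ex_fin_eq by blast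
  have "init (dual B) = sf"
    unfolding dual_def jdfa.select_convs
    by (rule the_equality) (use sf le_refl le_antisym in auto)
  with sf show "init (dual B) \<in> St B" "fin B = {s \<in> St B. \<not> le B s (init (dual B))}"
    by simp_all
qed

lemma not_fin_iff_le: "s \<in> St B \<Longrightarrow> s \<notin> fin B \<longleftrightarrow> le B s (init (dual B))"
  using fin_eq by blast

lemma mem_lang_iff: "s \<in> St B \<Longrightarrow> w \<in> lang B s \<longleftrightarrow> \<not> le B (dword B w s) (init (dual B))"
  using fin_eq dword_in_St by (auto simp: lang_def)

lemma delta_dual_in_St: "t \<in> St B \<Longrightarrow> delta (dual B) a t \<in> St B"
  and le_delta_dual_iff:
    "\<lbrakk>t \<in> St B; x \<in> St B\<rbrakk> \<Longrightarrow> le B x (delta (dual B) a t) \<longleftrightarrow> le B (delta B a x) t"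
proof -
  assume t: "t \<in> St B"
  define Y where "Y = {x \<in> St B. le B (delta B a x) t}"
  have Y: "finite Y" "Y \<subseteq> St B"
    using finite_St by (auto simp: Y_def)
  have m: "join B Y \<in> St B"
    using join_in_St[OF Y] .
  have dY: "finite (delta B a ` Y)" "delta B a ` Y \<subseteq> St B"
    using Y delta_in_St by auto
  have top: "le B (delta B a (join B Y)) t"
    unfolding delta_join[OF Y] join_le_iff[OF dY t] by (simp add: Y_def)
  have residual: "le B x (join B Y) \<longleftrightarrow> le B (delta B a x) t" if x: "x \<in> St B" for x
  proof
    assume "le B x (join B Y)"
    then show "le B (delta B a x) t"
      using le_trans[OF delta_in_St[OF x] delta_in_St[OF m] t] delta_mono[OF x m] top by blast
  next
    assume "le B (delta B a x) t"
    then show "le B x (join B Y)"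
      using le_join[OF Y] x by (simp add: Y_def)
  qed
  have "delta (dual B) a t = join B Y"
    unfolding dual_def jdfa.select_convs
    by (rule the_equality) (use m top residual le_refl le_antisym in metis)+
  with m residual show "delta (dual B) a t \<in> St B"
    and "x \<in> St B \<Longrightarrow> le B x (delta (dual B) a t) \<longleftrightarrow> le B (delta B a x) t" for x
    by simp_all
qed

lemma dword_dual_in_St: "t \<in> St B \<Longrightarrow> dword (dual B) w t \<in> St B"
  by (induction w arbitrary: t) (auto simp: delta_dual_in_St)

lemma le_dword_dual_iff:
  "\<lbrakk>t \<in> St B; x \<in> St B\<rbrakk> \<Longrightarrow> le B x (dword (dual B) w t) \<longleftrightarrow> le B (dword B (rev w) x) t"
  by (induction w arbitrary: t) (auto simp: delta_dual_in_St le_delta_dual_iff dword_in_St)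

lemma lang_dual: "t \<in> St B \<Longrightarrow> lang (dual B) t = {w. \<not> le B (dword B (rev w) (init B)) t}"
  using le_dword_dual_iff[OF _ init_in_St] dword_dual_in_St by (auto simp: lang_def)

lemma lang_dual_init: "lang (dual B) (init (dual B)) = {w. rev w \<in> lang B (init B)}"
  using lang_dual[OF init_dual_in_St] mem_lang_iff[OF init_in_St] by simp

lemma join_dual_in_St: "X \<subseteq> St B \<Longrightarrow> join (dual B) X \<in> St B"
  and le_join_dual_iff:
    "\<lbrakk>X \<subseteq> St B; z \<in> St B\<rbrakk> \<Longrightarrow> le B z (join (dual B) X) \<longleftrightarrow> (\<forall>y\<in>X. le B z y)"
proof -
  assume X: "X \<subseteq> St B"
  define L where "L = {z \<in> St B. \<forall>y\<in>X. le B z y}"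
  have L: "finite L" "L \<subseteq> St B"
    using finite_St by (auto simp: L_def)
  have m: "join B L \<in> St B"
    using join_in_St[OF L] .
  have glb: "le B z (join B L) \<longleftrightarrow> (\<forall>y\<in>X. le B z y)" if "z \<in> St B" for z
    using that le_join[OF L] join_le_iff[OF L] le_trans[OF that m] X m by (auto simp: L_def)
  have "join (dual B) X = join B L"
    unfolding join_def[of "dual B"]
  proof (rule the_equality)
    show "is_lub (dual B) X (join B L)"
      using m glb le_refl by (auto simp: is_lub_def)
  next
    fix x
    assume "is_lub (dual B) X x"
    moreover have "\<forall>y\<in>X. le B (join B L) y"
      using glb[OF m] le_refl[OF m] by blast
    ultimately have "x \<in> St B" "le B x (join B L)" "le B (join B L) x"
      using m glb by (auto simp: is_lub_def)
    then show "x = join B L"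
      using le_antisym m by blast
  qed
  with m glb show "join (dual B) X \<in> St B"
    and "z \<in> St B \<Longrightarrow> le B z (join (dual B) X) \<longleftrightarrow> (\<forall>y\<in>X. le B z y)" for z
    by simp_all
qed

lemma lang_dual_join:
  assumes X: "X \<subseteq> St B"
  shows "lang (dual B) (join (dual B) X) = \<Union> (lang (dual B) ` X)"
proof (rule set_eqI)
  fix w
  have "w \<in> lang (dual B) (join (dual B) X) \<longleftrightarrow> \<not> (\<forall>y\<in>X. le B (dword B (rev w) (init B)) y)"
    using lang_dual[OF join_dual_in_St[OF X]] le_join_dual_iff[OF X dword_in_St[OF init_in_St]]
    by simp
  also have "\<dots> \<longleftrightarrow> w \<in> \<Union> (lang (dual B) ` X)"
    using lang_dual X by auto
  finally show "w \<in> lang (dual B) (join (dual B) X) \<longleftrightarrow> w \<in> \<Union> (lang (dual B) ` X)" .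
qed

text \<open>A state is the join of the reachable states below it, and these are read off its dual
  language.\<close>

lemma inj_on_lang_dual:
  assumes "reachable B"
  shows "inj_on (lang (dual B)) (St B)"
proof -
  have le_if: "le B s t"
    if s: "s \<in> St B" and t: "t \<in> St B" and lang_eq: "lang (dual B) s = lang (dual B) t" for s t
  proof -
    obtain X where X: "finite X" "X \<subseteq> {dword B u (init B) | u. True}" "s = join B X"
      using assms s by (auto simp: reachable_def)
    have XSt: "X \<subseteq> St B"
      using X(2) dword_in_St[OF init_in_St] by blast
    have "le B x t" if "x \<in> X" for x
    proof -
      obtain u where u: "x = dword B u (init B)"
        using X(2) \<open>x \<in> X\<close> by blast
      have "rev u \<notin> lang (dual B) s"
        using le_join[OF X(1) XSt that] lang_dual[OF s] X(3) u by simp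
      then show ?thesis
        using lang_eq lang_dual[OF t] u by simp
    qed
    then show ?thesis
      using join_le_iff[OF X(1) XSt t] X(3) by simp
  qed
  show ?thesis
    by (rule inj_onI) (use le_if le_antisym in metis)
qed

subsection \<open>The transition semiring\<close>

lemma tsmap_apply: "s \<in> St B \<Longrightarrow> tsmap B W s = join B ((\<lambda>w. dword B w s) ` W)"
  and tsmap_outside: "s \<notin> St B \<Longrightarrow> tsmap B W s = undefined"
  by (simp_all add: tsmap_def)

lemma tsmap_in_St:
  assumes s: "s \<in> St B"
  shows "tsmap B W s \<in> St B"
proof -
  have "(\<lambda>w. dword B w s) ` W \<subseteq> St B"
    using s dword_in_St by blast
  then show ?thesis
    using join_in_St finite_subset[OF _ finite_St] s by (simp add: tsmap_apply)
qed

lemma tsmap_singleton: "tsmap B {u} = (\<lambda>s. if s \<in> St B then dword B u s else undefined)"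
  by (auto simp: tsmap_def dword_in_St)

lemma St_ts: "St (ts B) = {tsmap B W | W. finite W}"
  and le_ts: "le (ts B) f g \<longleftrightarrow> (\<forall>s\<in>St B. le B (f s) (g s))"
  and init_ts: "init (ts B) = tsmap B {[]}"
  by (simp_all add: ts_def)

lemma tsmap_in_St_ts: "finite W \<Longrightarrow> tsmap B W \<in> St (ts B)"
  by (auto simp: St_ts)

lemma ts_state_in_PiE: "f \<in> St (ts B) \<Longrightarrow> f \<in> St B \<rightarrow>\<^sub>E St B"
  using tsmap_in_St tsmap_outside by (auto simp: St_ts)

lemma ts_state_in_St: "\<lbrakk>f \<in> St (ts B); s \<in> St B\<rbrakk> \<Longrightarrow> f s \<in> St B"
  and ts_state_outside: "\<lbrakk>f \<in> St (ts B); s \<notin> St B\<rbrakk> \<Longrightarrow> f s = undefined"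
  using ts_state_in_PiE by (auto intro: PiE_mem PiE_arb)

lemma finite_St_ts: "finite (St (ts B))"
  by (rule finite_subset[OF _ finite_PiE[OF finite_St, of "\<lambda>_. St B"]])
    (use ts_state_in_PiE finite_St in blast)+

lemma ts_le_antisym:
  assumes "f \<in> St (ts B)" "g \<in> St (ts B)" "le (ts B) f g" "le (ts B) g f"
  shows "f = g"
proof
  fix s
  show "f s = g s"
  proof (cases "s \<in> St B")
    case True
    have "le B (f s) (g s)" "le B (g s) (f s)"
      using assms(3,4) True by (simp_all add: le_ts)
    then show ?thesis
      using le_antisym ts_state_in_St assms(1,2) True by blast
  next
    case False
    then show ?thesis
      using ts_state_outside assms(1,2) by metis
  qed
qed

lemma join_ts:
  assumes X: "finite X" "X \<subseteq> St (ts B)"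
  shows "join (ts B) X = (\<lambda>s. if s \<in> St B then join B ((\<lambda>f. f s) ` X) else undefined)"
    (is "_ = ?P")
    and "join (ts B) X \<in> St (ts B)"
    and "is_lub (ts B) X (join (ts B) X)"
proof -
  have "\<forall>f\<in>X. \<exists>W. finite W \<and> tsmap B W = f"
    using X(2) by (auto simp: St_ts)
  then obtain R where R: "\<And>f. f \<in> X \<Longrightarrow> finite (R f)" "\<And>f. f \<in> X \<Longrightarrow> tsmap B (R f) = f"
    by (metis bchoice)
  have "?P = tsmap B (\<Union>f\<in>X. R f)"
  proof
    fix s
    show "?P s = tsmap B (\<Union>f\<in>X. R f) s"
    proof (cases "s \<in> St B")
      case True
      have "(\<lambda>f. f s) ` X = (\<lambda>f. join B ((\<lambda>w. dword B w s) ` R f)) ` X"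
        using R(2) True by (auto simp: tsmap_apply[symmetric] intro!: image_cong)
      also have "join B \<dots> = join B (\<Union>f\<in>X. (\<lambda>w. dword B w s) ` R f)"
        by (rule join_UN[symmetric]) (use X R(1) True dword_in_St in blast)+
      finally show ?thesis
        using True by (simp add: tsmap_apply image_UN)
    qed (simp add: tsmap_outside)
  qed
  then have P: "?P \<in> St (ts B)"
    using X R by (auto simp: St_ts)
  have "is_lub (ts B) X ?P"
    unfolding is_lub_def le_ts
    using P X le_join join_le_iff ts_state_in_St by (auto simp: subset_eq)
  moreover from this have "join (ts B) X = ?P"
    unfolding join_def[of "ts B"]
    by (intro the_equality) (use ts_le_antisym in \<open>auto simp: is_lub_def\<close>)
  ultimately show "join (ts B) X = ?P" "join (ts B) X \<in> St (ts B)"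
    "is_lub (ts B) X (join (ts B) X)"
    using P by simp_all
qed

lemma delta_ts:
  assumes f: "f \<in> St (ts B)"
  shows "delta (ts B) a f = (\<lambda>s. if s \<in> St B then delta B a (f s) else undefined)"
    and "delta (ts B) a f \<in> St (ts B)"
proof -
  define W where "W = (SOME W. finite W \<and> f = tsmap B W)"
  have W: "finite W" "f = tsmap B W"
    using someI_ex[of "\<lambda>W. finite W \<and> f = tsmap B W"] f by (auto simp: St_ts W_def)
  have d: "delta (ts B) a f = tsmap B ((\<lambda>w. w @ [a]) ` W)"
    by (simp add: ts_def W_def)
  then show "delta (ts B) a f \<in> St (ts B)"
    using W by (auto simp: St_ts)
  show "delta (ts B) a f = (\<lambda>s. if s \<in> St B then delta B a (f s) else undefined)"
  proof
    fix s
    show "delta (ts B) a f s = (if s \<in> St B then delta B a (f s) else undefined)"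
    proof (cases "s \<in> St B")
      case True
      then have "finite ((\<lambda>w. dword B w s) ` W)" "(\<lambda>w. dword B w s) ` W \<subseteq> St B"
        using W(1) dword_in_St by auto
      then show ?thesis
        using d W(2) True delta_join by (simp add: tsmap_apply image_image)
    qed (simp add: d tsmap_outside)
  qed
qed

lemma dword_ts:
  "f \<in> St (ts B) \<Longrightarrow> dword (ts B) u f = (\<lambda>s. if s \<in> St B then dword B u (f s) else undefined)"
proof (induction u arbitrary: f)
  case Nil
  then show ?case
    using ts_state_outside by auto
next
  case (Cons a u)
  have "dword (ts B) (a # u) f = dword (ts B) u (delta (ts B) a f)"
    by simp
  also have "\<dots> = (\<lambda>s. if s \<in> St B then dword B u (delta (ts B) a f s) else undefined)"
    using Cons.IH[OF delta_ts(2)[OF Cons.prems]] .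
  also have "\<dots> = (\<lambda>s. if s \<in> St B then dword B (a # u) (f s) else undefined)"
    by (rule ext) (simp add: delta_ts(1)[OF Cons.prems])
  finally show ?case .
qed

lemma init_ts_in_St: "init (ts B) \<in> St (ts B)"
  by (auto simp: St_ts init_ts)

lemma dword_ts_init: "dword (ts B) u (init (ts B)) = tsmap B {u}"
proof -
  have "dword (ts B) u (init (ts B))
      = (\<lambda>s. if s \<in> St B then dword B u (init (ts B) s) else undefined)"
    by (rule dword_ts[OF init_ts_in_St])
  also have "\<dots> = tsmap B {u}"
    by (rule ext) (simp add: init_ts tsmap_singleton)
  finally show ?thesis .
qed

lemma fin_ts: "fin (ts B) = {f \<in> St (ts B). f (init B) \<in> fin B}"
proof -
  have "f (init B) \<in> fin B \<longleftrightarrow> (\<exists>w\<in>W. w \<in> lang B (init B))" if "finite W" "f = tsmap B W" for f W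
  proof -
    have "finite ((\<lambda>w. dword B w (init B)) ` W)" "(\<lambda>w. dword B w (init B)) ` W \<subseteq> St B"
      using that dword_in_St init_in_St by auto
    then show ?thesis
      using that join_le_iff[OF _ _ init_dual_in_St] tsmap_apply[OF init_in_St]
        tsmap_in_St[OF init_in_St] mem_lang_iff[OF init_in_St] fin_eq
      by auto
  qed
  then show ?thesis
    by (auto simp: ts_def)
qed


lemma join_pres_delta_ts: "join_pres (ts B) (ts B) (delta (ts B) a)"
  unfolding join_pres_def
proof (intro conjI allI impI)
  show "delta (ts B) a ` St (ts B) \<subseteq> St (ts B)"
    using delta_ts(2) by blast
next
  fix X
  assume "X \<subseteq> St (ts B) \<and> finite X"
  then have X: "finite X" "X \<subseteq> St (ts B)"
    by simp_all
  have dX: "finite (delta (ts B) a ` X)" "delta (ts B) a ` X \<subseteq> St (ts B)"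
    using X delta_ts(2) by auto
  show "delta (ts B) a (join (ts B) X) = join (ts B) (delta (ts B) a ` X)"
  proof
    fix s
    show "delta (ts B) a (join (ts B) X) s = join (ts B) (delta (ts B) a ` X) s"
    proof (cases "s \<in> St B")
      case True
      have Xs: "finite ((\<lambda>f. f s) ` X)" "(\<lambda>f. f s) ` X \<subseteq> St B"
        using X ts_state_in_St True by auto
      have "delta (ts B) a (join (ts B) X) s = delta B a (join B ((\<lambda>f. f s) ` X))"
        unfolding delta_ts(1)[OF join_ts(2)[OF X]] using True by (simp add: join_ts(1)[OF X])
      also have "\<dots> = join B (delta B a ` (\<lambda>f. f s) ` X)"
        by (rule delta_join[OF Xs])
      also have "delta B a ` (\<lambda>f. f s) ` X = (\<lambda>g. g s) ` delta (ts B) a ` X"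
        unfolding image_image
        by (rule image_cong) (use X(2) True delta_ts(1) in \<open>auto simp: subset_eq\<close>)
      finally show ?thesis
        using True by (simp add: join_ts(1)[OF dX])
    qed (unfold delta_ts(1)[OF join_ts(2)[OF X]], simp add: join_ts(1)[OF dX])
  qed
qed

lemma ex_fin_ts_eq: "\<exists>sf\<in>St (ts B). fin (ts B) = {f \<in> St (ts B). \<not> le (ts B) f sf}"
proof -
  define Z where "Z = {f \<in> St (ts B). f (init B) \<notin> fin B}"
  have Z: "finite Z" "Z \<subseteq> St (ts B)"
    using finite_St_ts by (auto simp: Z_def)
  have Zi: "finite ((\<lambda>g. g (init B)) ` Z)" "(\<lambda>g. g (init B)) ` Z \<subseteq> St B"
    using Z ts_state_in_St init_in_St by auto
  have "le (ts B) f (join (ts B) Z) \<longleftrightarrow> f \<in> Z" if f: "f \<in> St (ts B)" for f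
  proof
    assume "le (ts B) f (join (ts B) Z)"
    then have "le B (f (init B)) (join B ((\<lambda>g. g (init B)) ` Z))"
      using join_ts(1)[OF Z] init_in_St by (simp add: le_ts)
    moreover have "le B (join B ((\<lambda>g. g (init B)) ` Z)) (init (dual B))"
      unfolding join_le_iff[OF Zi init_dual_in_St]
      using not_fin_iff_le ts_state_in_St init_in_St by (auto simp: Z_def)
    ultimately have "le B (f (init B)) (init (dual B))"
      using le_trans join_in_St[OF Zi] init_dual_in_St ts_state_in_St[OF f init_in_St] by blast
    then show "f \<in> Z"
      using not_fin_iff_le ts_state_in_St[OF f init_in_St] f by (simp add: Z_def)
  next
    assume "f \<in> Z"
    then show "le (ts B) f (join (ts B) Z)"
      using join_ts(3)[OF Z] by (simp add: is_lub_def)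
  qed
  then show ?thesis
    using join_ts(2)[OF Z] by (auto simp: fin_ts Z_def)
qed

lemma jsl_ts: "jsl (ts B)"
proof (unfold_locales, unfold jsl_dfa_def, intro conjI ballI allI impI)
  show "le (ts B) f f" if "f \<in> St (ts B)" for f
    using that le_refl ts_state_in_St by (simp add: le_ts)
  show "le (ts B) f h"
    if "f \<in> St (ts B)" "g \<in> St (ts B)" "h \<in> St (ts B)" "le (ts B) f g \<and> le (ts B) g h" for f g h
    using that le_trans ts_state_in_St unfolding le_ts by blast
qed (use finite_St_ts ts_le_antisym join_ts(3) join_pres_delta_ts init_ts_in_St ex_fin_ts_eq in blast)+

lemma join_word_maps_in_St: "join (ts B) ((\<lambda>u. tsmap B {u}) ` C) \<in> St (ts B)"
  and join_word_maps_apply: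
    "s \<in> St B \<Longrightarrow> join (ts B) ((\<lambda>u. tsmap B {u}) ` C) s = join B ((\<lambda>u. dword B u s) ` C)"
proof -
  have "(\<lambda>u. tsmap B {u}) ` C \<subseteq> St (ts B)"
    using tsmap_in_St_ts by blast
  then have X: "finite ((\<lambda>u. tsmap B {u}) ` C)" "(\<lambda>u. tsmap B {u}) ` C \<subseteq> St (ts B)"
    using finite_subset[OF _ finite_St_ts] by blast+
  show "join (ts B) ((\<lambda>u. tsmap B {u}) ` C) \<in> St (ts B)"
    by (rule join_ts(2)[OF X])
  show "join (ts B) ((\<lambda>u. tsmap B {u}) ` C) s = join B ((\<lambda>u. dword B u s) ` C)" if "s \<in> St B"
    unfolding join_ts(1)[OF X] using that by (simp add: image_image tsmap_singleton)
qed

lemma reachable_ts: "reachable (ts B)"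
  unfolding reachable_def
proof
  fix f
  assume "f \<in> St (ts B)"
  then obtain W where W: "finite W" "f = tsmap B W"
    by (auto simp: St_ts)
  have "join (ts B) ((\<lambda>u. tsmap B {u}) ` W) = f"
  proof
    fix s
    show "join (ts B) ((\<lambda>u. tsmap B {u}) ` W) s = f s"
      using ts_state_outside[OF join_word_maps_in_St] W(2)
      by (cases "s \<in> St B") (simp_all add: join_word_maps_apply tsmap_apply tsmap_outside)
  qed
  moreover have "(\<lambda>u. tsmap B {u}) ` W \<subseteq> {dword (ts B) w (init (ts B)) | w. True}"
    by (auto simp: dword_ts_init)
  ultimately show "\<exists>X. finite X \<and> X \<subseteq> {dword (ts B) w (init (ts B)) | w. True} \<and> f = join (ts B) X"
    using W(1) by blast
qed

lemma lang_ts_init: "lang (ts B) (init (ts B)) = lang B (init B)"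
proof -
  have "tsmap B {u} \<in> fin (ts B) \<longleftrightarrow> dword B u (init B) \<in> fin B" for u
    using tsmap_in_St_ts[of "{u}"] unfolding fin_ts by (simp add: tsmap_singleton init_in_St)
  then show ?thesis
    by (simp add: lang_def dword_ts_init)
qed

end

subsection \<open>Constraint languages\<close>

definition constraint_lang :: "('s, 'c) jdfa \<Rightarrow> ('s \<times> 's) set \<Rightarrow> 'c list set" where
  "constraint_lang B R = {w. \<exists>(x, y)\<in>R. \<not> le B (dword B (rev w) x) y}"

lemma constraint_lang_Un: "constraint_lang B (R \<union> R') = constraint_lang B R \<union> constraint_lang B R'"
  by (auto simp: constraint_lang_def)

lemma constraint_lang_rderiv:
  "{w. w @ v \<in> constraint_lang B R} = constraint_lang B ((\<lambda>(x, y). (dword B (rev v) x, y)) ` R)"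
  by (force simp: constraint_lang_def)

lemma rqc_states_UN:
  "\<lbrakk>finite I; \<And>i. i \<in> I \<Longrightarrow> F i \<in> rqc_states B\<rbrakk> \<Longrightarrow> (\<Union>i\<in>I. F i) \<in> rqc_states B"
  by (induction I rule: finite_induct) (auto intro: rqc_states.empty rqc_states.union)

lemma join_rqc:
  assumes "finite Y" "Y \<subseteq> rqc_states B"
  shows "join (rqc B) Y = \<Union> Y"
proof -
  have "\<Union> Y \<in> rqc_states B"
    using rqc_states_UN[of Y "\<lambda>K. K"] assms by auto
  then show ?thesis
    unfolding join_def
  proof (intro the_equality)
    show "is_lub (rqc B) Y (\<Union> Y)"
      using \<open>\<Union> Y \<in> rqc_states B\<close> by (auto simp: is_lub_def rqc_def)
  next
    fix K
    assume "is_lub (rqc B) Y K"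
    then show "K = \<Union> Y"
      using \<open>\<Union> Y \<in> rqc_states B\<close> by (simp add: is_lub_def rqc_def) blast
  qed
qed

context jsl
begin

lemma lang_dual_eq_constraint_lang: "t \<in> St B \<Longrightarrow> lang (dual B) t = constraint_lang B {(init B, t)}"
  by (simp add: lang_dual constraint_lang_def)

lemma lang_dual_ts:
  assumes "f \<in> St (ts B)"
  shows "lang (dual (ts B)) f = constraint_lang B ((\<lambda>s. (s, f s)) ` St B)"
proof -
  interpret ts: jsl "ts B"
    by (rule jsl_ts)
  show ?thesis
    using ts.lang_dual[OF assms]
    by (auto simp: constraint_lang_def dword_ts_init le_ts tsmap_singleton)
qed

lemma ex_ts_state_lang_dual:
  assumes R: "R \<subseteq> St B \<times> St B"
  shows "\<exists>f\<in>St (ts B). lang (dual (ts B)) f = constraint_lang B R"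
proof -
  define C where "C = {u. \<forall>(x, y)\<in>R. le B (dword B u x) y}"
  define f where "f = join (ts B) ((\<lambda>u. tsmap B {u}) ` C)"
  have f: "f \<in> St (ts B)"
    unfolding f_def by (rule join_word_maps_in_St)
  have f_apply: "f s = join B ((\<lambda>u. dword B u s) ` C)" if "s \<in> St B" for s
    unfolding f_def using that by (rule join_word_maps_apply)
  have Cs: "(\<lambda>u. dword B u s) ` C \<subseteq> St B" if "s \<in> St B" for s
    using that dword_in_St by blast
  note Cs_finite = finite_subset[OF Cs finite_St]
  have below_f: "(\<forall>s\<in>St B. le B (dword B u s) (f s)) \<longleftrightarrow> u \<in> C" for u
  proof
    assume le_f: "\<forall>s\<in>St B. le B (dword B u s) (f s)"
    have "le B (dword B u x) y" if "(x, y) \<in> R" for x y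
    proof -
      have x: "x \<in> St B" and y: "y \<in> St B"
        using R that by auto
      have "le B (f x) y"
        unfolding f_apply[OF x] join_le_iff[OF Cs_finite[OF x] Cs[OF x] y]
        using that by (auto simp: C_def)
      then show ?thesis
        using le_f le_trans[OF dword_in_St[OF x] ts_state_in_St[OF f x] y] x by blast
    qed
    then show "u \<in> C"
      by (auto simp: C_def)
  next
    assume "u \<in> C"
    then show "\<forall>s\<in>St B. le B (dword B u s) (f s)"
      using le_join[OF Cs_finite Cs] f_apply by simp
  qed
  have "w \<in> constraint_lang B ((\<lambda>s. (s, f s)) ` St B) \<longleftrightarrow> w \<in> constraint_lang B R" for w
    using below_f[of "rev w"] by (auto simp: constraint_lang_def C_def)
  then have "lang (dual (ts B)) f = constraint_lang B R"
    unfolding lang_dual_ts[OF f] by blast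
  with f show ?thesis
    by blast
qed

lemma rqc_states_dual_imp_constraint_lang:
  "K \<in> rqc_states (dual B) \<Longrightarrow> \<exists>R \<subseteq> St B \<times> St B. K = constraint_lang B R"
proof (induction rule: rqc_states.induct)
  case (base t)
  then show ?case
    by (intro exI[of _ "{(init B, t)}"]) (simp add: init_in_St lang_dual_eq_constraint_lang)
next
  case empty
  show ?case
    by (intro exI[of _ "{}"]) (simp add: constraint_lang_def)
next
  case (union K K')
  then obtain R R' where "R \<subseteq> St B \<times> St B" "K = constraint_lang B R"
    and "R' \<subseteq> St B \<times> St B" "K' = constraint_lang B R'"
    by blast
  then show ?case
    by (intro exI[of _ "R \<union> R'"]) (simp add: constraint_lang_Un)
next
  case (rderiv K v)
  then obtain R where R: "R \<subseteq> St B \<times> St B" "K = constraint_lang B R"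
    by blast
  have "(\<lambda>(x, y). (dword B (rev v) x, y)) ` R \<subseteq> St B \<times> St B"
    using R(1) dword_in_St by auto
  then show ?case
    using constraint_lang_rderiv[of v B R] R(2) by blast
qed

text \<open>If x is the join of the states \<delta>(u)(s0), u \<in> U, then the constraint (x, y) yields the union
  over U of the right derivatives of L(A^op, y) by the reversed words u.\<close>

lemma constraint_lang_singleton_in_rqc_states:
  assumes "reachable B" and x: "x \<in> St B" and y: "y \<in> St B"
  shows "constraint_lang B {(x, y)} \<in> rqc_states (dual B)"
proof -
  obtain X where X: "finite X" "X \<subseteq> {dword B u (init B) | u. True}" "x = join B X"
    using assms(1) x unfolding reachable_def by blast
  then have "X \<subseteq> range (\<lambda>u. dword B u (init B))"
    by blast
  then obtain U where U: "finite U" "X = (\<lambda>u. dword B u (init B)) ` U"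
    using finite_subset_image[OF X(1)] by blast
  have XSt: "X \<subseteq> St B"
    using U(2) dword_in_St init_in_St by blast
  have "constraint_lang B {(x, y)} = (\<Union>u\<in>U. {w. w @ rev u \<in> lang (dual B) y})"
  proof (rule set_eqI)
    fix w
    have "finite (dword B (rev w) ` X)" "dword B (rev w) ` X \<subseteq> St B"
      using X(1) XSt dword_in_St by auto
    then show "w \<in> constraint_lang B {(x, y)} \<longleftrightarrow> w \<in> (\<Union>u\<in>U. {w. w @ rev u \<in> lang (dual B) y})"
      using join_le_iff[OF _ _ y] dword_join[OF X(1) XSt] X(3) U(2) lang_dual[OF y]
      by (auto simp: constraint_lang_def)
  qed
  also have "\<dots> \<in> rqc_states (dual B)"
    using U(1) y by (intro rqc_states_UN rqc_states.rderiv) (auto intro: rqc_states.base)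
  finally show ?thesis .
qed

lemma rqc_states_dual_eq:
  assumes "reachable B"
  shows "rqc_states (dual B) = {constraint_lang B R | R. R \<subseteq> St B \<times> St B}"
proof (intro antisym subsetI)
  fix K
  assume "K \<in> {constraint_lang B R | R. R \<subseteq> St B \<times> St B}"
  then obtain R where R: "R \<subseteq> St B \<times> St B" "K = constraint_lang B R"
    by blast
  have "K = (\<Union>p\<in>R. constraint_lang B {p})"
    using R(2) by (auto simp: constraint_lang_def)
  also have "\<dots> \<in> rqc_states (dual B)"
  proof (rule rqc_states_UN)
    show "finite R"
      by (rule finite_subset[OF R(1)]) (simp add: finite_St)
    show "constraint_lang B {p} \<in> rqc_states (dual B)" if "p \<in> R" for p
      using that R(1) constraint_lang_singleton_in_rqc_states[OF assms] by force
  qed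
  finally show "K \<in> rqc_states (dual B)" .
qed (use rqc_states_dual_imp_constraint_lang in blast)

lemma lang_dual_ts_image:
  "lang (dual (ts B)) ` St (ts B) = {constraint_lang B R | R. R \<subseteq> St B \<times> St B}"
proof (intro antisym subsetI)
  fix K
  assume "K \<in> lang (dual (ts B)) ` St (ts B)"
  then obtain f where f: "f \<in> St (ts B)" "K = lang (dual (ts B)) f"
    by blast
  have "(\<lambda>s. (s, f s)) ` St B \<subseteq> St B \<times> St B"
    using ts_state_in_St[OF f(1)] by blast
  then show "K \<in> {constraint_lang B R | R. R \<subseteq> St B \<times> St B}"
    using lang_dual_ts[OF f(1)] f(2) by blast
next
  fix K
  assume "K \<in> {constraint_lang B R | R. R \<subseteq> St B \<times> St B}"
  then obtain R where "R \<subseteq> St B \<times> St B" "K = constraint_lang B R"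
    by blast
  then show "K \<in> lang (dual (ts B)) ` St (ts B)"
    using ex_ts_state_lang_dual by (metis imageI)
qed

end

subsection \<open>Isomorphism with the right-derivative closure\<close>

lemma morphism_inv_into:
  assumes m: "morphism P Q f" and bij: "bij_betw f (St P) (St Q)"
    and delta_in: "\<And>a s. s \<in> St P \<Longrightarrow> delta P a s \<in> St P"
    and init_in: "init P \<in> St P"
    and join_in: "\<And>X. \<lbrakk>finite X; X \<subseteq> St P\<rbrakk> \<Longrightarrow> join P X \<in> St P"
  shows "morphism Q P (inv_into (St P) f)"
proof -
  let ?g = "inv_into (St P) f"
  have fg: "f (?g t) = t" and g_in: "?g t \<in> St P" if "t \<in> St Q" for t
    using bij that by (auto simp: bij_betw_def f_inv_into_f inv_into_into)
  have g_eq: "?g t = p" if "p \<in> St P" "f p = t" for p t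
    using bij that by (auto simp: bij_betw_inv_into_left)
  have f: "join_pres P Q f" "\<And>a s. s \<in> St P \<Longrightarrow> f (delta P a s) = delta Q a (f s)"
    "f (init P) = init Q" "\<And>s. s \<in> St P \<Longrightarrow> s \<in> fin P \<longleftrightarrow> f s \<in> fin Q"
    using m by (auto simp: morphism_def)
  show ?thesis
    unfolding morphism_def join_pres_def
  proof (intro conjI allI ballI impI)
    show "?g ` St Q \<subseteq> St P"
      using g_in by blast
  next
    fix X
    assume X: "X \<subseteq> St Q \<and> finite X"
    have gX: "finite (?g ` X)" "?g ` X \<subseteq> St P"
      using X g_in by auto
    have "f ` ?g ` X = X"
      using X fg by (force simp: image_image)
    then have "f (join P (?g ` X)) = join Q X"
      using f(1) gX unfolding join_pres_def by metis
    then show "?g (join Q X) = join P (?g ` X)"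
      using g_eq join_in[OF gX] by blast
  next
    fix a t
    assume "t \<in> St Q"
    then show "?g (delta Q a t) = delta P a (?g t)"
      using g_eq delta_in g_in f(2) fg by metis
  next
    show "?g (init Q) = init P"
      using g_eq init_in f(3) by blast
  next
    fix t
    assume "t \<in> St Q"
    then show "t \<in> fin Q \<longleftrightarrow> ?g t \<in> fin P"
      using f(4) g_in fg by metis
  qed
qed

lemma jdfa_iso_if_bij_morphism:
  assumes "morphism P Q f" and bij: "bij_betw f (St P) (St Q)"
    and "\<And>a s. s \<in> St P \<Longrightarrow> delta P a s \<in> St P"
    and "init P \<in> St P"
    and "\<And>X. \<lbrakk>finite X; X \<subseteq> St P\<rbrakk> \<Longrightarrow> join P X \<in> St P"
  shows "jdfa_iso P Q"
  unfolding jdfa_iso_def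
proof (intro exI conjI ballI)
  show "morphism Q P (inv_into (St P) f)"
    using assms by (rule morphism_inv_into)
qed (use assms(1) bij_betw_inv_into_left[OF bij] bij_betw_inv_into_right[OF bij] in simp_all)

lemma jdfa_iso_rqcI:
  assumes join_in: "\<And>X. \<lbrakk>finite X; X \<subseteq> St P\<rbrakk> \<Longrightarrow> join P X \<in> St P"
    and lang_join: "\<And>X. \<lbrakk>finite X; X \<subseteq> St P\<rbrakk> \<Longrightarrow> lang P (join P X) = \<Union> (lang P ` X)"
    and delta_in: "\<And>a s. s \<in> St P \<Longrightarrow> delta P a s \<in> St P"
    and init_in: "init P \<in> St P"
    and inj: "inj_on (lang P) (St P)"
    and image: "lang P ` St P = rqc_states C"
    and lang_init: "lang P (init P) = lang C (init C)"
  shows "jdfa_iso P (rqc C)"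
proof (rule jdfa_iso_if_bij_morphism)
  show "bij_betw (lang P) (St P) (St (rqc C))"
    using inj image by (simp add: bij_betw_def rqc_def)
  show "morphism P (rqc C) (lang P)"
    unfolding morphism_def join_pres_def
  proof (intro conjI allI ballI impI)
    show "lang P ` St P \<subseteq> St (rqc C)"
      using image by (simp add: rqc_def)
    show "lang P (join P X) = join (rqc C) (lang P ` X)" if X: "X \<subseteq> St P \<and> finite X" for X
    proof -
      have "finite (lang P ` X)" "lang P ` X \<subseteq> rqc_states C"
        using X image by auto
      then show ?thesis
        using X by (simp add: lang_join join_rqc)
    qed
  qed (use image in \<open>auto simp: Nil_in_lang_iff lang_delta lang_init rqc_def\<close>)
qed (use join_in delta_in init_in in auto)

theorem proposition3p14:
  fixes A :: "('s, 'c) jdfa"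
  assumes "jsl_dfa A" and "reachable A"
  shows "jdfa_iso (dual (ts A)) (rqc (dual A))"
proof -
  interpret A: jsl A
    by unfold_locales (fact assms(1))
  interpret T: jsl "ts A"
    by (rule A.jsl_ts)
  show ?thesis
  proof (rule jdfa_iso_rqcI)
    show "inj_on (lang (dual (ts A))) (St (dual (ts A)))"
      using T.inj_on_lang_dual[OF A.reachable_ts] by simp
    show "lang (dual (ts A)) ` St (dual (ts A)) = rqc_states (dual A)"
      using A.lang_dual_ts_image A.rqc_states_dual_eq[OF assms(2)] by simp
    show "lang (dual (ts A)) (init (dual (ts A))) = lang (dual A) (init (dual A))"
      using T.lang_dual_init A.lang_ts_init A.lang_dual_init by simp
  qed (simp_all add: T.join_dual_in_St T.lang_dual_join T.delta_dual_in_St T.init_dual_in_St)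
qed

end
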